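(* Let $G$ be a graph, $B\subseteq V(G)$ and $\ell\ge 1$. Then $B$ is a mixed $\ell$-leaky forcing set of $G$ if and only if $B$ is an $(\ell-1)$-leaky forcing set of $G$ such that for every set $L\subseteq V(G)$ of $\ell-1$ vertex leaks and every $v\in V(G)\setminus B$ there exist forces $x\to v$ and $y\to v$ in $\mathcal{F}_L(B)$ with $x\ne y$.
   Context: All graphs are finite, simple and undirected. Zero forcing: a blue vertex $u$ with exactly one white neighbor $w$ may force $w$ (color it blue), written $u\to w$. From an initial blue set $B$, a forcing sequence is a chronologically ordered list of forces each valid when performed. A vertex leak is a vertex not allowed to perform any force; $B$ is an $\ell$-leaky forcing set if for every set of at most $\ell$ vertex leaks, exhaustively applying the forcing rule from $B$ colors all of $V(G)$ blue. For $L\subseteq V(G)$, $\mathcal{F}_L(B)$ is the set of all forces $x\to v$ occurring in some forcing sequence from $B$ in which no vertex of $L$ performs a force. An edge leak is an edge $xy$ across which no force may be performed (neither $x\to y$ nor $y\to x$). A specified leak is an ordered pair $x\to y$ meaning $x$ may not force $y$. A leak is any of these three kinds. $B$ is a mixed $\ell$-leaky forcing set if for every set of at most $\ell$ leaks (of any mix of kinds), exhaustively applying the forcing rule from $B$ subject to the leaks colors all of $V(G)$ blue. *)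

theory Defs
  imports Main
begin

definition simple_graph :: "'a set \<Rightarrow> ('a \<Rightarrow> 'a \<Rightarrow> bool) \<Rightarrow> bool" where
  "simple_graph V E \<longleftrightarrow> finite V \<and>
     (\<forall>x y. E x y \<longrightarrow> x \<in> V \<and> y \<in> V \<and> x \<noteq> y \<and> E y x)"

text \<open>Final blue set obtained by exhaustively applying the forcing rule from B,
  where blk x y means that x is not allowed to force y.\<close>
inductive_set closure :: "('a \<Rightarrow> 'a \<Rightarrow> bool) \<Rightarrow> ('a \<Rightarrow> 'a \<Rightarrow> bool) \<Rightarrow> 'a set \<Rightarrow> 'a set"
  for E blk B where
  base: "b \<in> B \<Longrightarrow> b \<in> closure E blk B"
| force: "\<lbrakk>u \<in> closure E blk B; E u w; \<not> blk u w;
          \<And>z. E u z \<Longrightarrow> z \<noteq> w \<Longrightarrow> z \<in> closure E blk B\<rbrakk>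
          \<Longrightarrow> w \<in> closure E blk B"

definition leaky_forcing_set :: "'a set \<Rightarrow> ('a \<Rightarrow> 'a \<Rightarrow> bool) \<Rightarrow> 'a set \<Rightarrow> nat \<Rightarrow> bool" where
  "leaky_forcing_set V E B l \<longleftrightarrow>
     (\<forall>L. L \<subseteq> V \<and> card L \<le> l \<longrightarrow> closure E (\<lambda>x y. x \<in> L) B = V)"

text \<open>Leaks of the three kinds: vertex leak, edge leak (an unordered edge),
  specified leak x -> y.\<close>
datatype 'a leak = VLeak 'a | ELeak "'a set" | SLeak 'a 'a

definition valid_leak :: "'a set \<Rightarrow> ('a \<Rightarrow> 'a \<Rightarrow> bool) \<Rightarrow> 'a leak \<Rightarrow> bool" where
  "valid_leak V E lk = (case lk of
      VLeak x \<Rightarrow> x \<in> V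
    | ELeak e \<Rightarrow> (\<exists>x y. e = {x, y} \<and> E x y)
    | SLeak x y \<Rightarrow> E x y)"

definition leak_blocks :: "'a leak set \<Rightarrow> 'a \<Rightarrow> 'a \<Rightarrow> bool" where
  "leak_blocks Ls x y \<longleftrightarrow> VLeak x \<in> Ls \<or> ELeak {x, y} \<in> Ls \<or> SLeak x y \<in> Ls"

definition mixed_leaky_forcing_set :: "'a set \<Rightarrow> ('a \<Rightarrow> 'a \<Rightarrow> bool) \<Rightarrow> 'a set \<Rightarrow> nat \<Rightarrow> bool" where
  "mixed_leaky_forcing_set V E B l \<longleftrightarrow>
     (\<forall>Ls. finite Ls \<and> card Ls \<le> l \<and> (\<forall>lk \<in> Ls. valid_leak V E lk)
        \<longrightarrow> closure E (leak_blocks Ls) B = V)"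

definition forcing_seq :: "('a \<Rightarrow> 'a \<Rightarrow> bool) \<Rightarrow> 'a set \<Rightarrow> 'a set \<Rightarrow> ('a \<times> 'a) list \<Rightarrow> bool" where
  "forcing_seq E L B fs \<longleftrightarrow>
     (\<forall>i < length fs.
        (let x = fst (fs ! i); v = snd (fs ! i); S = B \<union> snd ` set (take i fs) in
          x \<in> S \<and> v \<notin> S \<and> E x v \<and> x \<notin> L \<and> (\<forall>z. E x z \<and> z \<noteq> v \<longrightarrow> z \<in> S)))"

definition forces_set :: "('a \<Rightarrow> 'a \<Rightarrow> bool) \<Rightarrow> 'a set \<Rightarrow> 'a set \<Rightarrow> ('a \<times> 'a) set" where
  "forces_set E L B = {f. \<exists>fs. forcing_seq E L B fs \<and> f \<in> set fs}"

end

theory Submission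
  imports Defs
begin

text \<open>A leak blocking a force u \<rightarrow> w can be traded for a vertex leak at u, so mixed
  \<open>\<ell>\<close>-leaky forcing sets are exactly the \<open>\<ell>\<close>-leaky ones, and it remains to compare
  \<open>\<ell>\<close> with \<open>\<ell> - 1\<close> vertex leaks. If every v \<notin> B has two forcers under the leaks L,
  adding one more leak a cannot stop the process: the first force missing under
  L \<union> {a} is a \<rightarrow> b with all other neighbours of a blue, and the second forcer of b
  would need b to be forced by a first. Conversely, if x \<rightarrow> v is a force under L,
  making x a further vertex leak shows that v has a forcer other than x.\<close>

definition valid_force ::
    "('a \<Rightarrow> 'a \<Rightarrow> bool) \<Rightarrow> ('a \<Rightarrow> 'a \<Rightarrow> bool) \<Rightarrow> 'a set \<Rightarrow> 'a \<Rightarrow> 'a \<Rightarrow> bool" where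
  "valid_force E blk S x v \<longleftrightarrow>
     x \<in> S \<and> v \<notin> S \<and> E x v \<and> \<not> blk x v \<and> (\<forall>z. E x z \<and> z \<noteq> v \<longrightarrow> z \<in> S)"

definition forcing_seq_blk ::
    "('a \<Rightarrow> 'a \<Rightarrow> bool) \<Rightarrow> ('a \<Rightarrow> 'a \<Rightarrow> bool) \<Rightarrow> 'a set \<Rightarrow> ('a \<times> 'a) list \<Rightarrow> bool" where
  "forcing_seq_blk E blk B fs \<longleftrightarrow>
     (\<forall>i < length fs. valid_force E blk (B \<union> snd ` set (take i fs)) (fst (fs ! i)) (snd (fs ! i)))"

lemma forcing_seq_eq_blk: "forcing_seq E L B = forcing_seq_blk E (\<lambda>x y. x \<in> L) B"
  by (intro ext) (simp add: forcing_seq_def forcing_seq_blk_def valid_force_def Let_def)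

lemma forcing_seq_blk_Nil [simp]: "forcing_seq_blk E blk B []"
  by (simp add: forcing_seq_blk_def)

lemma forcing_seq_blk_snoc:
  "forcing_seq_blk E blk B (fs @ [(x, v)]) \<longleftrightarrow>
     forcing_seq_blk E blk B fs \<and> valid_force E blk (B \<union> snd ` set fs) x v"
  unfolding forcing_seq_blk_def by (auto simp: nth_append less_Suc_eq)

lemma forcing_seq_blk_mono:
  assumes "forcing_seq_blk E blk B fs" and "\<And>x y. blk' x y \<Longrightarrow> blk x y"
  shows "forcing_seq_blk E blk' B fs"
  using assms unfolding forcing_seq_blk_def valid_force_def by blast

lemma forcing_seq_blk_appendD:
  "forcing_seq_blk E blk B (xs @ ys) \<Longrightarrow> forcing_seq_blk E blk B xs"
  by (induction ys rule: rev_induct) (auto simp: forcing_seq_blk_snoc simp flip: append_assoc)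

lemma forcing_seq_blk_in_setE:
  assumes "forcing_seq_blk E blk B fs" and "(x, v) \<in> set fs"
  obtains p where "forcing_seq_blk E blk B p" and "valid_force E blk (B \<union> snd ` set p) x v"
proof -
  obtain p q where "fs = p @ (x, v) # q"
    using assms(2) by (meson in_set_conv_decomp)
  then have "forcing_seq_blk E blk B (p @ [(x, v)])"
    using assms(1) forcing_seq_blk_appendD[of E blk B "p @ [(x, v)]" q] by simp
  then show thesis
    using that unfolding forcing_seq_blk_snoc by blast
qed

lemma forcing_seq_blk_distinct_targets:
  "forcing_seq_blk E blk B fs \<Longrightarrow> distinct (map snd fs)"
  by (induction fs rule: rev_induct) (force simp: forcing_seq_blk_snoc valid_force_def)+

lemma forcing_seq_blk_targets_subset:
  assumes "simple_graph V E" and "forcing_seq_blk E blk B fs"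
  shows "snd ` set fs \<subseteq> V"
proof
  fix v assume "v \<in> snd ` set fs"
  then obtain x where "(x, v) \<in> set fs" by force
  then have "E x v"
    using assms(2) by (auto elim: forcing_seq_blk_in_setE simp: valid_force_def)
  then show "v \<in> V"
    using assms(1) unfolding simple_graph_def by blast
qed

lemma forcing_seq_blk_length_le:
  assumes "simple_graph V E" and "forcing_seq_blk E blk B fs"
  shows "length fs \<le> card V"
proof -
  have "length fs = card (snd ` set fs)"
    using forcing_seq_blk_distinct_targets[OF assms(2)] by (metis distinct_card length_map set_map)
  also have "\<dots> \<le> card V"
    using forcing_seq_blk_targets_subset[OF assms] assms(1)
    by (intro card_mono) (auto simp: simple_graph_def)
  finally show ?thesis .
qed

text \<open>A forcing sequence of maximal length cannot be extended, so its targets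
  together with B exhaust the closure.\<close>
lemma closure_subset_targets:
  assumes "simple_graph V E"
  obtains fs where "forcing_seq_blk E blk B fs" and "closure E blk B \<subseteq> B \<union> snd ` set fs"
proof -
  obtain fs where fs: "forcing_seq_blk E blk B fs"
    and maximal: "\<And>fs'. forcing_seq_blk E blk B fs' \<Longrightarrow> length fs' \<le> length fs"
    using ex_has_greatest_nat[of "forcing_seq_blk E blk B" "[]" length "Suc (card V)"]
      forcing_seq_blk_length_le[OF assms] by (metis forcing_seq_blk_Nil le_imp_less_Suc)
  have "w \<in> B \<union> snd ` set fs" if "w \<in> closure E blk B" for w
    using that
  proof (induction rule: closure.induct)
    case (force u w)
    show ?case
    proof (rule ccontr)
      assume "w \<notin> B \<union> snd ` set fs"
      with force have "forcing_seq_blk E blk B (fs @ [(u, w)])"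
        using fs by (simp add: forcing_seq_blk_snoc valid_force_def)
      then show False
        using maximal by fastforce
    qed
  qed simp
  then show thesis
    using that fs by blast
qed

lemma closure_forcedE:
  assumes "simple_graph V E" and "v \<in> closure E blk B" and "v \<notin> B"
  obtains fs x where "forcing_seq_blk E blk B fs" and "(x, v) \<in> set fs"
    and "E x v" and "\<not> blk x v"
proof -
  obtain fs where fs: "forcing_seq_blk E blk B fs" and "closure E blk B \<subseteq> B \<union> snd ` set fs"
    using closure_subset_targets[OF assms(1)] .
  then obtain x where x: "(x, v) \<in> set fs"
    using assms(2,3) by force
  then have "E x v" and "\<not> blk x v"
    using fs by (auto elim: forcing_seq_blk_in_setE simp: valid_force_def)
  then show thesis
    using that fs x by blast
qed

lemma closure_subset:
  assumes "simple_graph V E" and "B \<subseteq> V"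
  shows "closure E blk B \<subseteq> V"
proof
  fix w assume "w \<in> closure E blk B"
  then show "w \<in> V"
    by induction (use assms in \<open>auto simp: simple_graph_def\<close>)
qed

text \<open>At the first target outside the closure all earlier blue vertices lie in the
  closure, so only blk can have prevented that force there.\<close>
lemma forcing_seq_blk_leaves_closure:
  assumes "forcing_seq_blk E blk' B fs" and "\<not> snd ` set fs \<subseteq> closure E blk B"
  obtains x v where "(x, v) \<in> set fs" and "v \<notin> closure E blk B" and "blk x v"
    and "\<not> blk' x v" and "E x v" and "\<forall>z. E x z \<and> z \<noteq> v \<longrightarrow> z \<in> closure E blk B"
proof -
  let ?C = "closure E blk B"
  have "\<exists>x v. (x, v) \<in> set fs \<and> v \<notin> ?C \<and> blk x v \<and> \<not> blk' x v \<and> E x v \<and>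
           (\<forall>z. E x z \<and> z \<noteq> v \<longrightarrow> z \<in> ?C)"
    using assms
  proof (induction fs rule: rev_induct)
    case (snoc f fs)
    obtain x v where f: "f = (x, v)" by fastforce
    show ?case
    proof (cases "snd ` set fs \<subseteq> ?C")
      case True
      have "B \<subseteq> ?C" by (auto intro: closure.base)
      with True have blue: "B \<union> snd ` set fs \<subseteq> ?C" by blast
      have "v \<notin> ?C" using snoc.prems(2) True f by simp
      moreover have valid: "valid_force E blk' (B \<union> snd ` set fs) x v"
        using snoc.prems(1) f by (simp add: forcing_seq_blk_snoc)
      moreover have "blk x v"
      proof (rule ccontr)
        assume "\<not> blk x v"
        moreover have "x \<in> ?C" and "E x v" and "\<And>z. E x z \<Longrightarrow> z \<noteq> v \<Longrightarrow> z \<in> ?C"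
          using valid blue unfolding valid_force_def by blast+
        ultimately have "v \<in> ?C"
          by (blast intro: closure.force)
        with \<open>v \<notin> ?C\<close> show False ..
      qed
      moreover have "(x, v) \<in> set (fs @ [f])"
        using f by simp
      ultimately show ?thesis
        using blue unfolding valid_force_def by blast
    next
      case False
      then show ?thesis
        using snoc f by (auto simp: forcing_seq_blk_snoc)
    qed
  qed simp
  then show thesis
    using that by blast
qed

lemma closure_insert_vertex_leak:
  assumes graph: "simple_graph V E" and "B \<subseteq> V"
    and two_forcers: "\<forall>v \<in> V - B. \<exists>x y. (x, v) \<in> forces_set E L B \<and> (y, v) \<in> forces_set E L B \<and> x \<noteq> y"
  shows "closure E (\<lambda>x y. x \<in> insert a L) B = V"
proof (rule ccontr)
  let ?C = "closure E (\<lambda>x y. x \<in> insert a L) B"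
  let ?blk = "\<lambda>x y. x \<in> L"
  have forces: "(x, v) \<in> forces_set E L B \<longleftrightarrow> (\<exists>fs. forcing_seq_blk E ?blk B fs \<and> (x, v) \<in> set fs)"
    for x v by (simp add: forces_set_def forcing_seq_eq_blk)
  have "B \<subseteq> ?C" by (auto intro: closure.base)
  assume "?C \<noteq> V"
  then obtain v0 where "v0 \<in> V - B" and "v0 \<notin> ?C"
    using closure_subset[OF assms(1,2)] \<open>B \<subseteq> ?C\<close> by blast
  then obtain fs0 x0 where "forcing_seq_blk E ?blk B fs0" and "(x0, v0) \<in> set fs0"
    using two_forcers forces by blast
  then obtain b where "b \<notin> ?C" and "E a b" and a_nbrs: "\<forall>z. E a z \<and> z \<noteq> b \<longrightarrow> z \<in> ?C"
    using \<open>v0 \<notin> ?C\<close> by (auto elim!: forcing_seq_blk_leaves_closure[where blk = "\<lambda>x y. x \<in> insert a L"])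
  then have "b \<in> V - B"
    using graph \<open>B \<subseteq> ?C\<close> unfolding simple_graph_def by blast
  then obtain x' where "(x', b) \<in> forces_set E L B" and "x' \<noteq> a"
    using two_forcers by metis
  then obtain fs where "forcing_seq_blk E ?blk B fs" and "(x', b) \<in> set fs"
    using forces by blast
  then obtain p where "forcing_seq_blk E ?blk B p" and "valid_force E ?blk (B \<union> snd ` set p) x' b"
    by (rule forcing_seq_blk_in_setE)
  then have "forcing_seq_blk E ?blk B (p @ [(x', b)])" and "b \<notin> snd ` set p"
    by (simp_all add: forcing_seq_blk_snoc valid_force_def)
  then obtain v where "(a, v) \<in> set (p @ [(x', b)])" and "v \<notin> ?C" and "E a v"
    using \<open>b \<notin> ?C\<close> by (auto elim!: forcing_seq_blk_leaves_closure[where blk = "\<lambda>x y. x \<in> insert a L"])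
  then have "(a, b) \<in> set p"
    using a_nbrs \<open>x' \<noteq> a\<close> by auto
  with \<open>b \<notin> snd ` set p\<close> show False
    by force
qed

lemma leaky_forcing_set_Suc_iff:
  assumes graph: "simple_graph V E" and "B \<subseteq> V"
  shows "leaky_forcing_set V E B (Suc k) \<longleftrightarrow>
           leaky_forcing_set V E B k \<and>
           (\<forall>L. L \<subseteq> V \<and> card L = k \<longrightarrow>
              (\<forall>v \<in> V - B. \<exists>x y. (x, v) \<in> forces_set E L B \<and> (y, v) \<in> forces_set E L B \<and> x \<noteq> y))"
    (is "?lhs \<longleftrightarrow> ?leaky \<and> ?two_forcers")
proof
  have forces: "(x, v) \<in> forces_set E L B"
    if "forcing_seq_blk E (\<lambda>x y. x \<in> L) B fs" and "(x, v) \<in> set fs" for L fs x v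
    using that by (auto simp: forces_set_def forcing_seq_eq_blk)
  assume ?lhs
  then have ?leaky
    unfolding leaky_forcing_set_def by simp
  moreover have ?two_forcers
  proof (intro allI impI ballI)
    fix L v assume L: "L \<subseteq> V \<and> card L = k" and v: "v \<in> V - B"
    then have "v \<in> closure E (\<lambda>x y. x \<in> L) B"
      using \<open>?lhs\<close> unfolding leaky_forcing_set_def by simp
    then obtain fs x where x: "forcing_seq_blk E (\<lambda>x y. x \<in> L) B fs" "(x, v) \<in> set fs" "E x v"
      using closure_forcedE[OF graph] v by blast
    have "insert x L \<subseteq> V" and "card (insert x L) \<le> Suc k"
      using L x(3) graph card_insert_le_m1[of "Suc k" L x] unfolding simple_graph_def by auto
    then have "v \<in> closure E (\<lambda>z w. z \<in> insert x L) B"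
      using \<open>?lhs\<close> v unfolding leaky_forcing_set_def by blast
    then obtain fs' y where y: "forcing_seq_blk E (\<lambda>z w. z \<in> insert x L) B fs'" "(y, v) \<in> set fs'"
      and "y \<notin> insert x L"
      using closure_forcedE[OF graph] v by blast
    have "forcing_seq_blk E (\<lambda>z w. z \<in> L) B fs'"
      using y(1) by (rule forcing_seq_blk_mono) simp
    then show "\<exists>x y. (x, v) \<in> forces_set E L B \<and> (y, v) \<in> forces_set E L B \<and> x \<noteq> y"
      using forces x y \<open>y \<notin> insert x L\<close> by blast
  qed
  ultimately show "?leaky \<and> ?two_forcers" ..
next
  assume "?leaky \<and> ?two_forcers"
  then have leaky: ?leaky and two_forcers: ?two_forcers
    by blast+
  show ?lhs
    unfolding leaky_forcing_set_def
  proof (intro allI impI)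
    fix L' assume L': "L' \<subseteq> V \<and> card L' \<le> Suc k"
    show "closure E (\<lambda>x y. x \<in> L') B = V"
    proof (cases "card L' \<le> k")
      case True
      then show ?thesis
        using leaky L' unfolding leaky_forcing_set_def by blast
    next
      case False
      then obtain a where a: "a \<in> L'"
        by fastforce
      have "finite L'"
        using L' graph finite_subset unfolding simple_graph_def by blast
      then have "L' - {a} \<subseteq> V \<and> card (L' - {a}) = k"
        using L' False a by auto
      then have "closure E (\<lambda>x y. x \<in> insert a (L' - {a})) B = V"
        using two_forcers by (intro closure_insert_vertex_leak[OF assms]) blast
      then show ?thesis
        using a by (simp add: insert_absorb)
    qed
  qed
qed

text \<open>Each leak is charged to a vertex leak at the vertex that would perform the
  blocked force; for an edge leak that is the endpoint lying in the final blue set, so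
  the choice refers to the closure under the given leaks.\<close>
lemma vertex_leaks_dominate_leaks:
  assumes graph: "simple_graph V E" and "finite Ls"
  obtains L where "L \<subseteq> V" and "card L \<le> card Ls"
    and "closure E (\<lambda>x y. x \<in> L) B \<subseteq> closure E (leak_blocks Ls) B"
proof -
  let ?C = "closure E (leak_blocks Ls) B"
  define forcer where "forcer lk =
    (case lk of VLeak x \<Rightarrow> x | ELeak e \<Rightarrow> (SOME u. u \<in> e \<inter> ?C) | SLeak x y \<Rightarrow> x)" for lk
  define L where "L = forcer ` Ls \<inter> V"
  have "card L \<le> card (forcer ` Ls)"
    unfolding L_def using assms(2) by (simp add: card_mono)
  also have "\<dots> \<le> card Ls"
    using assms(2) by (rule card_image_le)
  finally have "card L \<le> card Ls" .
  moreover have "closure E (\<lambda>x y. x \<in> L) B \<subseteq> ?C"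
  proof
    fix w assume "w \<in> closure E (\<lambda>x y. x \<in> L) B"
    then show "w \<in> ?C"
    proof induction
      case (base b)
      then show ?case by (rule closure.base)
    next
      case (force u w)
      show ?case
      proof (rule ccontr)
        assume "w \<notin> ?C"
        with force have "leak_blocks Ls u w"
          by (blast intro: closure.force)
        moreover have "forcer (ELeak {u, w}) = u"
        proof -
          have "{u, w} \<inter> ?C = {u}"
            using force.IH(1) \<open>w \<notin> ?C\<close> by blast
          then show ?thesis
            unfolding forcer_def by simp
        qed
        ultimately have "u \<in> forcer ` Ls"
          unfolding leak_blocks_def by (force simp: forcer_def)
        moreover have "u \<in> V"
          using force.hyps(2) graph unfolding simple_graph_def by blast
        ultimately show False
          using force.hyps(3) unfolding L_def by blast
      qed
    qed
  qed
  ultimately show thesis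
    using that unfolding L_def by blast
qed

lemma mixed_leaky_forcing_set_iff_leaky_forcing_set:
  assumes graph: "simple_graph V E" and "B \<subseteq> V"
  shows "mixed_leaky_forcing_set V E B l \<longleftrightarrow> leaky_forcing_set V E B l"
proof
  assume mixed: "mixed_leaky_forcing_set V E B l"
  show "leaky_forcing_set V E B l"
    unfolding leaky_forcing_set_def
  proof (intro allI impI)
    fix L assume L: "L \<subseteq> V \<and> card L \<le> l"
    then have "finite L"
      using graph finite_subset unfolding simple_graph_def by blast
    then have "finite (VLeak ` L)" and "card (VLeak ` L) \<le> l"
      using L card_image_le[of L VLeak] by auto
    moreover have "\<forall>lk \<in> VLeak ` L. valid_leak V E lk"
      using L by (auto simp: valid_leak_def)
    moreover have "leak_blocks (VLeak ` L) = (\<lambda>x y. x \<in> L)"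
      by (intro ext) (auto simp: leak_blocks_def)
    ultimately show "closure E (\<lambda>x y. x \<in> L) B = V"
      using mixed unfolding mixed_leaky_forcing_set_def by metis
  qed
next
  assume leaky: "leaky_forcing_set V E B l"
  show "mixed_leaky_forcing_set V E B l"
    unfolding mixed_leaky_forcing_set_def
  proof (intro allI impI)
    fix Ls :: "'a leak set" assume Ls: "finite Ls \<and> card Ls \<le> l \<and> (\<forall>lk \<in> Ls. valid_leak V E lk)"
    then obtain L where "L \<subseteq> V" and "card L \<le> l"
      and "closure E (\<lambda>x y. x \<in> L) B \<subseteq> closure E (leak_blocks Ls) B"
      by (metis graph vertex_leaks_dominate_leaks le_trans)
    then show "closure E (leak_blocks Ls) B = V"
      using leaky closure_subset[OF assms] unfolding leaky_forcing_set_def by blast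
  qed
qed

theorem theorem4p2:
  fixes V :: "'a set" and E :: "'a \<Rightarrow> 'a \<Rightarrow> bool" and B :: "'a set" and l :: nat
  assumes "simple_graph V E" and "B \<subseteq> V" and "l \<ge> 1"
  shows "mixed_leaky_forcing_set V E B l \<longleftrightarrow>
           (leaky_forcing_set V E B (l - 1) \<and>
            (\<forall>L. L \<subseteq> V \<and> card L = l - 1 \<longrightarrow>
               (\<forall>v \<in> V - B. \<exists>x y. (x, v) \<in> forces_set E L B \<and> (y, v) \<in> forces_set E L B \<and> x \<noteq> y)))"
proof -
  have "l = Suc (l - 1)"
    using assms(3) by simp
  then show ?thesis
    using mixed_leaky_forcing_set_iff_leaky_forcing_set[OF assms(1,2)]
      leaky_forcing_set_Suc_iff[OF assms(1,2), of "l - 1"] by metis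
qed

end
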